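(* Let $E$ be a countable set and $\mathcal{C}=\langle E,X\rangle$ a stable configuration structure. Then for every finite configuration $x\in X$, the symmetric residual $x\odot\mathcal{C}$ is stable. Consequently, $\odot$ is a (partial) group action on stable configuration structures.
   Context: A configuration structure over $E$ is a pair $\mathcal{C}=\langle E,X\rangle$ with $X\subseteq\mathcal{P}(E)$ (its configurations). For finite $x\in X$, $x\odot\mathcal{C}:=\langle E,\{y\mathbin{\triangle}x\mid y\in X\}\rangle$, where $\mathbin{\triangle}$ is symmetric difference. $\mathcal{C}$ is stable if it is: rooted ($\emptyset\in X$); connected (for all $x\in X$ with $x\neq\emptyset$ there is $a\in x$ with $x\setminus\{a\}\in X$); closed under bounded union (for all $x,y,z\in X$, $x\cup y\subseteq z$ implies $x\cup y\in X$); closed under intersection (for all $x,y\in X$, $x\cap y\in X$); coherent (for all $x,y,z\in X$, if there are $z',z'',z'''\in X$ with $x\cup y\subseteq z'$, $y\cup z\subseteq z''$, $x\cup z\subseteq z'''$, then $x\cup y\cup z\in X$). *)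

theory Defs
  imports Main "HOL-Library.Countable_Set"
begin

type_synonym 'a cs = "'a set \<times> 'a set set"

definition events :: "'a cs \<Rightarrow> 'a set" where "events C = fst C"
definition configs :: "'a cs \<Rightarrow> 'a set set" where "configs C = snd C"

definition conf_struct :: "'a cs \<Rightarrow> bool" where
  "conf_struct C \<longleftrightarrow> configs C \<subseteq> Pow (events C)"

definition sym_residual :: "'a set \<Rightarrow> 'a cs \<Rightarrow> 'a cs" (infixr "\<odot>" 70) where
  "x \<odot> C = (events C, {y - x \<union> (x - y) | y. y \<in> configs C})"

definition rooted :: "'a cs \<Rightarrow> bool" where
  "rooted C \<longleftrightarrow> {} \<in> configs C"

definition connected_cs :: "'a cs \<Rightarrow> bool" where
  "connected_cs C \<longleftrightarrow> (\<forall>x\<in>configs C. x \<noteq> {} \<longrightarrow> (\<exists>a\<in>x. x - {a} \<in> configs C))"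

definition closed_bounded_union :: "'a cs \<Rightarrow> bool" where
  "closed_bounded_union C \<longleftrightarrow>
     (\<forall>x\<in>configs C. \<forall>y\<in>configs C. \<forall>z\<in>configs C. x \<union> y \<subseteq> z \<longrightarrow> x \<union> y \<in> configs C)"

definition closed_intersection :: "'a cs \<Rightarrow> bool" where
  "closed_intersection C \<longleftrightarrow> (\<forall>x\<in>configs C. \<forall>y\<in>configs C. x \<inter> y \<in> configs C)"

definition coherent :: "'a cs \<Rightarrow> bool" where
  "coherent C \<longleftrightarrow>
     (\<forall>x\<in>configs C. \<forall>y\<in>configs C. \<forall>z\<in>configs C.
        (\<exists>z'\<in>configs C. \<exists>z''\<in>configs C. \<exists>z'''\<in>configs C.
            x \<union> y \<subseteq> z' \<and> y \<union> z \<subseteq> z'' \<and> x \<union> z \<subseteq> z''')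
        \<longrightarrow> x \<union> y \<union> z \<in> configs C)"

definition stable :: "'a cs \<Rightarrow> bool" where
  "stable C \<longleftrightarrow> rooted C \<and> connected_cs C \<and> closed_bounded_union C
                 \<and> closed_intersection C \<and> coherent C"

end

theory Submission
  imports Defs
begin

text \<open>
  For intersection,
  bounded union and coherence, the set to be shown a configuration of \<open>x \<odot> C\<close>, translated
  back by \<open>\<triangle> x\<close>, is a union of three pairwise bounded intersections of configurations of
  \<open>C\<close> (e.g. \<open>(a \<inter> b) \<triangle> x\<close> is the majority of \<open>a \<triangle> x\<close>, \<open>b \<triangle> x\<close> and \<open>x\<close>), so coherence of
  \<open>C\<close> applies. Connectedness of \<open>x \<odot> C\<close> asks, for \<open>y \<in> X\<close> with \<open>y \<noteq> x\<close>, for one event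
  \<open>e \<in> y \<triangle> x\<close> with \<open>y \<triangle> {e} \<in> X\<close>. If \<open>y \<subseteq> x\<close>, strip events off \<open>x\<close> until what is left
  lies in \<open>y\<close> and add the last one to \<open>y\<close>; otherwise strip events off \<open>y\<close> until one outside
  \<open>x\<close> goes, and restore the others by a bounded union with \<open>x \<inter> y\<close>. Both loops terminate
  only because \<open>x\<close> is finite. The action law is associativity of \<open>\<triangle>\<close>.
\<close>

abbreviation sym_diff :: "'a set \<Rightarrow> 'a set \<Rightarrow> 'a set" (infixl "\<triangle>" 75) where
  "y \<triangle> x \<equiv> y - x \<union> (x - y)"

lemma sym_diff_sym_diff_cancel [simp]: "y \<triangle> x \<triangle> x = y"
  by auto

lemma events_sym_residual [simp]: "events (x \<odot> C) = events C"
  by (simp add: sym_residual_def events_def)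

lemma configs_sym_residual: "configs (x \<odot> C) = (\<lambda>y. y \<triangle> x) ` configs C"
  by (auto simp: sym_residual_def configs_def)

lemma in_configs_sym_residual_iff: "w \<in> configs (x \<odot> C) \<longleftrightarrow> w \<triangle> x \<in> configs C"
proof
  assume "w \<in> configs (x \<odot> C)"
  then obtain y where "y \<in> configs C" "w = y \<triangle> x"
    by (auto simp: configs_sym_residual)
  then show "w \<triangle> x \<in> configs C"
    by simp
next
  assume "w \<triangle> x \<in> configs C"
  then have "w \<triangle> x \<triangle> x \<in> (\<lambda>y. y \<triangle> x) ` configs C"
    by (rule imageI)
  then show "w \<in> configs (x \<odot> C)"
    by (simp add: configs_sym_residual)
qed

lemma sym_residual_empty [simp]: "{} \<odot> C = C"
  by (simp add: sym_residual_def events_def configs_def)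

lemma sym_residual_sym_residual: "y \<odot> (x \<odot> C) = (y \<triangle> x) \<odot> C"
proof -
  have "\<And>w. w \<triangle> x \<triangle> y = w \<triangle> (y \<triangle> x)"
    by auto
  then have "configs (y \<odot> (x \<odot> C)) = configs ((y \<triangle> x) \<odot> C)"
    unfolding configs_sym_residual image_image by simp
  then show ?thesis
    by (simp add: prod_eq_iff events_def[symmetric] configs_def[symmetric])
qed

lemma conf_struct_sym_residual:
  assumes "conf_struct C" "x \<subseteq> events C"
  shows "conf_struct (x \<odot> C)"
  using assms by (auto simp: conf_struct_def configs_sym_residual)

lemma closed_intersectionD:
  "closed_intersection C \<Longrightarrow> x \<in> configs C \<Longrightarrow> y \<in> configs C \<Longrightarrow> x \<inter> y \<in> configs C"
  unfolding closed_intersection_def by blast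

lemma closed_bounded_unionD:
  "closed_bounded_union C \<Longrightarrow> x \<in> configs C \<Longrightarrow> y \<in> configs C \<Longrightarrow> z \<in> configs C
    \<Longrightarrow> x \<union> y \<subseteq> z \<Longrightarrow> x \<union> y \<in> configs C"
  unfolding closed_bounded_union_def by blast

lemma connected_csD:
  "connected_cs C \<Longrightarrow> x \<in> configs C \<Longrightarrow> x \<noteq> {} \<Longrightarrow> \<exists>a\<in>x. x - {a} \<in> configs C"
  unfolding connected_cs_def by blast

lemma coherentD:
  assumes "coherent C" "x \<in> configs C" "y \<in> configs C" "z \<in> configs C"
    and "z' \<in> configs C" "z'' \<in> configs C" "z''' \<in> configs C"
    and "x \<union> y \<subseteq> z'" "y \<union> z \<subseteq> z''" "x \<union> z \<subseteq> z'''"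
  shows "x \<union> y \<union> z \<in> configs C"
  using assms unfolding coherent_def by blast

lemma stableD:
  assumes "stable C"
  shows "{} \<in> configs C" "connected_cs C" "closed_bounded_union C"
    "closed_intersection C" "coherent C"
  using assms by (simp_all add: stable_def rooted_def)

lemma majority_in_configs:
  assumes "closed_intersection C" "coherent C"
    and "x \<in> configs C" "y \<in> configs C" "z \<in> configs C"
  shows "(x \<inter> y) \<union> (x \<inter> z) \<union> (y \<inter> z) \<in> configs C"
  by (rule coherentD[OF assms(2) _ _ _ assms(3) assms(5) assms(4)])
    (auto intro: closed_intersectionD[OF assms(1)] simp: assms)

lemma closed_intersection_sym_residual:
  assumes "closed_intersection C" "coherent C" "x \<in> configs C"
  shows "closed_intersection (x \<odot> C)"
  unfolding closed_intersection_def
proof (intro ballI)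
  fix a b assume "a \<in> configs (x \<odot> C)" "b \<in> configs (x \<odot> C)"
  then have A: "a \<triangle> x \<in> configs C" and B: "b \<triangle> x \<in> configs C"
    by (simp_all add: in_configs_sym_residual_iff)
  have "(a \<triangle> x \<inter> b \<triangle> x) \<union> (a \<triangle> x \<inter> x) \<union> (b \<triangle> x \<inter> x) \<in> configs C"
    by (rule majority_in_configs[OF assms(1,2) A B assms(3)])
  moreover have "(a \<inter> b) \<triangle> x = (a \<triangle> x \<inter> b \<triangle> x) \<union> (a \<triangle> x \<inter> x) \<union> (b \<triangle> x \<inter> x)"
    by auto
  ultimately show "a \<inter> b \<in> configs (x \<odot> C)"
    by (simp add: in_configs_sym_residual_iff)
qed

lemma closed_bounded_union_sym_residual:
  assumes "closed_intersection C" "coherent C" "x \<in> configs C"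
  shows "closed_bounded_union (x \<odot> C)"
  unfolding closed_bounded_union_def
proof (intro ballI impI)
  fix a b c assume "a \<in> configs (x \<odot> C)" "b \<in> configs (x \<odot> C)" "c \<in> configs (x \<odot> C)"
    and bound: "a \<union> b \<subseteq> c"
  then have A: "a \<triangle> x \<in> configs C" and B: "b \<triangle> x \<in> configs C" and W: "c \<triangle> x \<in> configs C"
    by (simp_all add: in_configs_sym_residual_iff)
  let ?u = "a \<triangle> x \<inter> c \<triangle> x" and ?v = "b \<triangle> x \<inter> c \<triangle> x" and ?w = "x \<inter> a \<triangle> x \<inter> b \<triangle> x"
  have "?u \<in> configs C" "?v \<in> configs C" "?w \<in> configs C"
    using A B W assms(3) by (auto intro: closed_intersectionD[OF assms(1)])
  then have "?u \<union> ?v \<union> ?w \<in> configs C"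
    by (rule coherentD[OF assms(2) _ _ _ W B A]) auto
  moreover have "(a \<union> b) \<triangle> x = ?u \<union> ?v \<union> ?w"
    using bound by auto
  ultimately show "a \<union> b \<in> configs (x \<odot> C)"
    by (simp add: in_configs_sym_residual_iff)
qed

lemma coherent_sym_residual:
  assumes "closed_intersection C" "coherent C" "x \<in> configs C"
  shows "coherent (x \<odot> C)"
  unfolding coherent_def
proof (intro ballI impI)
  fix a b c
  assume abc: "a \<in> configs (x \<odot> C)" "b \<in> configs (x \<odot> C)" "c \<in> configs (x \<odot> C)"
    and "\<exists>z'\<in>configs (x \<odot> C). \<exists>z''\<in>configs (x \<odot> C). \<exists>z'''\<in>configs (x \<odot> C).
           a \<union> b \<subseteq> z' \<and> b \<union> c \<subseteq> z'' \<and> a \<union> c \<subseteq> z'''"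
  with closed_bounded_union_sym_residual[OF assms]
  have "a \<union> b \<in> configs (x \<odot> C)" "b \<union> c \<in> configs (x \<odot> C)" "a \<union> c \<in> configs (x \<odot> C)"
    by (meson closed_bounded_unionD)+
  with abc have A: "a \<triangle> x \<in> configs C" and B: "b \<triangle> x \<in> configs C" and Cc: "c \<triangle> x \<in> configs C"
    and AB: "(a \<union> b) \<triangle> x \<in> configs C" and BC: "(b \<union> c) \<triangle> x \<in> configs C"
    and AC: "(a \<union> c) \<triangle> x \<in> configs C"
    by (simp_all add: in_configs_sym_residual_iff)
  let ?u = "(a \<union> b) \<triangle> x \<inter> (a \<union> c) \<triangle> x \<inter> a \<triangle> x"
    and ?v = "(a \<union> b) \<triangle> x \<inter> (b \<union> c) \<triangle> x \<inter> b \<triangle> x"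
    and ?w = "(b \<union> c) \<triangle> x \<inter> (a \<union> c) \<triangle> x \<inter> c \<triangle> x"
  have "?u \<in> configs C" "?v \<in> configs C" "?w \<in> configs C"
    using A B Cc AB BC AC by (auto intro: closed_intersectionD[OF assms(1)])
  then have "?u \<union> ?v \<union> ?w \<in> configs C"
    by (rule coherentD[OF assms(2) _ _ _ AB BC AC]) auto
  moreover have "(a \<union> b \<union> c) \<triangle> x = ?u \<union> ?v \<union> ?w"
    by auto
  ultimately show "a \<union> b \<union> c \<in> configs (x \<odot> C)"
    by (simp add: in_configs_sym_residual_iff)
qed

lemma remove_event_outside_finite:
  assumes "connected_cs C" "closed_bounded_union C" "finite u" "u \<in> configs C"
  shows "z \<in> configs C \<Longrightarrow> u \<union> z \<in> configs C \<Longrightarrow> \<not> z \<subseteq> u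
    \<Longrightarrow> \<exists>e\<in>z - u. (u \<union> z) - {e} \<in> configs C"
proof (induction "card (z \<inter> u)" arbitrary: z rule: less_induct)
  case less
  then have "z \<noteq> {}"
    by blast
  then obtain a where a: "a \<in> z" "z - {a} \<in> configs C"
    using connected_csD[OF assms(1) less.prems(1)] by blast
  show ?case
  proof (cases "a \<in> u")
    case False
    have "(z - {a}) \<union> u \<in> configs C"
      using a(2) assms(4) less.prems(2) by (rule closed_bounded_unionD[OF assms(2)]) blast
    moreover have "(z - {a}) \<union> u = (u \<union> z) - {a}"
      using False by blast
    ultimately have "(u \<union> z) - {a} \<in> configs C"
      by simp
    moreover have "a \<in> z - u"
      using False a(1) by blast
    ultimately show ?thesis
      by blast
  next
    case True
    have "card ((z - {a}) \<inter> u) < card (z \<inter> u)"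
      using True a(1) assms(3) by (intro psubset_card_mono) auto
    moreover have "u \<union> (z - {a}) = u \<union> z"
      using True by blast
    moreover have "\<not> z - {a} \<subseteq> u"
      using True less.prems(3) by blast
    ultimately obtain e where "e \<in> z - {a} - u" "(u \<union> z) - {e} \<in> configs C"
      using less.hyps[OF _ a(2)] less.prems(2) by metis
    then show ?thesis
      by blast
  qed
qed

lemma insert_event_from_finite:
  assumes "connected_cs C" "closed_bounded_union C" "u \<in> configs C"
  shows "finite z \<Longrightarrow> z \<in> configs C \<Longrightarrow> u \<union> z \<in> configs C \<Longrightarrow> \<not> z \<subseteq> u
    \<Longrightarrow> \<exists>e\<in>z - u. insert e u \<in> configs C"
proof (induction "card z" arbitrary: z rule: less_induct)
  case less
  then have "z \<noteq> {}"
    by blast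
  then obtain a where a: "a \<in> z" "z - {a} \<in> configs C"
    using connected_csD[OF assms(1) less.prems(2)] by blast
  show ?case
  proof (cases "z - {a} \<subseteq> u")
    case True
    have "u \<union> z = insert a u"
      using True a(1) by blast
    then show ?thesis
      using less.prems(3,4) True a(1) by auto
  next
    case False
    have "card (z - {a}) < card z"
      using a(1) less.prems(1) by (intro psubset_card_mono) auto
    moreover have "u \<union> (z - {a}) \<in> configs C"
      using assms(3) a(2) less.prems(3) by (rule closed_bounded_unionD[OF assms(2)]) blast
    ultimately show ?thesis
      using less.hyps[OF _ _ a(2) _ False] less.prems(1) by auto
  qed
qed

lemma single_step_towards_finite_config:
  assumes "connected_cs C" "closed_bounded_union C" "closed_intersection C"
    and "finite x" "x \<in> configs C" "y \<in> configs C" "y \<noteq> x"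
  shows "\<exists>e\<in>y \<triangle> x. y \<triangle> {e} \<in> configs C"
proof (cases "y \<subseteq> x")
  case True
  have "y \<union> x \<in> configs C" "\<not> x \<subseteq> y"
    using True assms(5,7) by (simp_all add: sup.absorb2 subset_antisym)
  then obtain e where e: "e \<in> x - y" "insert e y \<in> configs C"
    using insert_event_from_finite[OF assms(1,2,6,4,5)] by blast
  then have "y \<triangle> {e} = insert e y"
    by auto
  with e show ?thesis
    by (intro bexI[of _ e]) auto
next
  case False
  have "finite (x \<inter> y)" "x \<inter> y \<in> configs C"
    using assms(4,5,6) closed_intersectionD[OF assms(3)] by auto
  moreover have "(x \<inter> y) \<union> y \<in> configs C" "\<not> y \<subseteq> x \<inter> y"
    using False assms(6) by (simp_all add: Int_absorb1 sup.absorb2)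
  ultimately obtain e where e: "e \<in> y - x \<inter> y" "(x \<inter> y) \<union> y - {e} \<in> configs C"
    using remove_event_outside_finite[OF assms(1,2)] assms(6) by blast
  then have "y \<triangle> {e} = (x \<inter> y) \<union> y - {e}"
    by auto
  with e show ?thesis
    by (intro bexI[of _ e]) auto
qed

lemma connected_cs_sym_residual:
  assumes "connected_cs C" "closed_bounded_union C" "closed_intersection C"
    and "finite x" "x \<in> configs C"
  shows "connected_cs (x \<odot> C)"
  unfolding connected_cs_def
proof (intro ballI impI)
  fix w assume "w \<in> configs (x \<odot> C)" "w \<noteq> {}"
  then have "w \<triangle> x \<in> configs C" "w \<triangle> x \<noteq> x"
    by (auto simp: in_configs_sym_residual_iff)
  then obtain e where "e \<in> w" "w \<triangle> x \<triangle> {e} \<in> configs C"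
    using single_step_towards_finite_config[OF assms] by auto
  moreover have "(w - {e}) \<triangle> x = w \<triangle> x \<triangle> {e}"
    using \<open>e \<in> w\<close> by auto
  ultimately show "\<exists>a\<in>w. w - {a} \<in> configs (x \<odot> C)"
    by (metis in_configs_sym_residual_iff)
qed

theorem stable_sym_residual:
  assumes "stable C" "finite x" "x \<in> configs C"
  shows "stable (x \<odot> C)"
  using assms stableD[OF assms(1)]
  by (simp add: stable_def rooted_def in_configs_sym_residual_iff connected_cs_sym_residual
      closed_bounded_union_sym_residual closed_intersection_sym_residual coherent_sym_residual)

theorem mainTheorem5:
  fixes C :: "'a cs"
  assumes "conf_struct C"
    and "countable (events C)"
    and "stable C"
  shows "(\<forall>x\<in>configs C. finite x \<longrightarrow> conf_struct (x \<odot> C) \<and> stable (x \<odot> C))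
    \<and> {} \<odot> C = C
    \<and> (\<forall>x\<in>configs C. finite x \<longrightarrow>
         (\<forall>y\<in>configs (x \<odot> C). finite y \<longrightarrow>
            (y - x \<union> (x - y)) \<in> configs C \<and> finite (y - x \<union> (x - y))
            \<and> y \<odot> (x \<odot> C) = (y - x \<union> (x - y)) \<odot> C))"
proof (intro conjI ballI impI)
  fix x assume x: "x \<in> configs C" "finite x"
  show "stable (x \<odot> C)"
    using stable_sym_residual[OF assms(3) x(2,1)] .
  show "conf_struct (x \<odot> C)"
    using assms(1) x(1) by (intro conf_struct_sym_residual) (auto simp: conf_struct_def)
next
  fix x y assume "x \<in> configs C" "finite x" "y \<in> configs (x \<odot> C)" "finite y"
  then show "y \<triangle> x \<in> configs C" "finite (y \<triangle> x)" "y \<odot> (x \<odot> C) = (y \<triangle> x) \<odot> C"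
    by (simp_all add: in_configs_sym_residual_iff sym_residual_sym_residual)
qed simp

end
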